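(* Let $A$ be a commutative $K$-algebra, $\mathcal{D}(A)$ its algebra of differential operators, $R$ a subalgebra of $\mathcal{D}(A)$ with $A\subseteq R$, and $R_i=R\cap\mathcal{D}(A)_i$ for $i\geq 0$. If $\mathfrak{a}$ is a nonzero ideal of $R$, then $\mathfrak{a}_0=\mathfrak{a}\cap A$ is a nonzero ideal of $A$ such that $[R_1,\mathfrak{a}_0]\subseteq\mathfrak{a}_0$ and $R\mathfrak{a}_0R\cap A=\mathfrak{a}_0$. Moreover, for an ideal $\mathfrak{a}_0$ of $A$ the condition $[R_1,\mathfrak{a}_0]\subseteq\mathfrak{a}_0$ is equivalent to $[D_R,\mathfrak{a}_0]\subseteq\mathfrak{a}_0$, where $D_R=R_1\cap\mathrm{Der}_K(A)$.
   Context: For a commutative $K$-algebra $A$, $\mathcal{D}(A)=\bigcup_{i\geq0}\mathcal{D}(A)_i\subseteq\mathrm{End}_K(A)$ where $\mathcal{D}(A)_{-1}=0$ and $\mathcal{D}(A)_i=\{u\in\mathrm{End}_K(A)\mid au-ua\in\mathcal{D}(A)_{i-1}\ \forall a\in A\}$; $A$ is identified with $\mathcal{D}(A)_0$ via multiplication operators. $[x,y]=xy-yx$. *)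

theory Defs
  imports Main
begin

definition K_algebra :: "('k::field \<Rightarrow> 'a::comm_ring_1 \<Rightarrow> 'a) \<Rightarrow> bool" where
  "K_algebra sm \<longleftrightarrow>
     (\<forall>c x y. sm c (x + y) = sm c x + sm c y) \<and>
     (\<forall>c d x. sm (c + d) x = sm c x + sm d x) \<and>
     (\<forall>c d x. sm (c * d) x = sm c (sm d x)) \<and>
     (\<forall>x. sm 1 x = x) \<and>
     (\<forall>c x y. sm c (x * y) = sm c x * y)"

definition End_K :: "('k::field \<Rightarrow> 'a::comm_ring_1 \<Rightarrow> 'a) \<Rightarrow> ('a \<Rightarrow> 'a) set" where
  "End_K sm = {u. (\<forall>x y. u (x + y) = u x + u y) \<and> (\<forall>c x. u (sm c x) = sm c (u x))}"

text \<open>Multiplication operator, identifying A with D(A)_0.\<close>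
definition mulop :: "'a::comm_ring_1 \<Rightarrow> 'a \<Rightarrow> 'a" where
  "mulop a = (\<lambda>x. a * x)"

definition comm :: "('a::comm_ring_1 \<Rightarrow> 'a) \<Rightarrow> ('a \<Rightarrow> 'a) \<Rightarrow> 'a \<Rightarrow> 'a" where
  "comm u v = (\<lambda>x. u (v x) - v (u x))"

text \<open>Shifted filtration: Dsh sm 0 = D(A)_{-1} = 0, Dsh sm (Suc i) = D(A)_i.\<close>
fun Dsh :: "('k::field \<Rightarrow> 'a::comm_ring_1 \<Rightarrow> 'a) \<Rightarrow> nat \<Rightarrow> ('a \<Rightarrow> 'a) set" where
  "Dsh sm 0 = {\<lambda>x. 0}"
| "Dsh sm (Suc i) = {u \<in> End_K sm. \<forall>a. comm (mulop a) u \<in> Dsh sm i}"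

definition Dord :: "('k::field \<Rightarrow> 'a::comm_ring_1 \<Rightarrow> 'a) \<Rightarrow> nat \<Rightarrow> ('a \<Rightarrow> 'a) set" where
  "Dord sm i = Dsh sm (Suc i)"

definition DiffOps :: "('k::field \<Rightarrow> 'a::comm_ring_1 \<Rightarrow> 'a) \<Rightarrow> ('a \<Rightarrow> 'a) set" where
  "DiffOps sm = (\<Union>i. Dord sm i)"

definition Der_K :: "('k::field \<Rightarrow> 'a::comm_ring_1 \<Rightarrow> 'a) \<Rightarrow> ('a \<Rightarrow> 'a) set" where
  "Der_K sm = {d \<in> End_K sm. \<forall>x y. d (x * y) = x * d y + y * d x}"

definition subalgebra_D :: "('k::field \<Rightarrow> 'a::comm_ring_1 \<Rightarrow> 'a) \<Rightarrow> ('a \<Rightarrow> 'a) set \<Rightarrow> bool" where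
  "subalgebra_D sm R \<longleftrightarrow> R \<subseteq> DiffOps sm \<and> id \<in> R \<and> (\<lambda>x. 0) \<in> R \<and>
     (\<forall>u\<in>R. \<forall>v\<in>R. (\<lambda>x. u x + v x) \<in> R \<and> (\<lambda>x. u x - v x) \<in> R \<and> u \<circ> v \<in> R) \<and>
     (\<forall>c. \<forall>u\<in>R. (\<lambda>x. sm c (u x)) \<in> R)"

definition ideal_R :: "('k::field \<Rightarrow> 'a::comm_ring_1 \<Rightarrow> 'a) \<Rightarrow> ('a \<Rightarrow> 'a) set \<Rightarrow> ('a \<Rightarrow> 'a) set \<Rightarrow> bool" where
  "ideal_R sm R I \<longleftrightarrow> I \<subseteq> R \<and> (\<lambda>x. 0) \<in> I \<and>
     (\<forall>u\<in>I. \<forall>v\<in>I. (\<lambda>x. u x + v x) \<in> I \<and> (\<lambda>x. u x - v x) \<in> I) \<and>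
     (\<forall>c. \<forall>u\<in>I. (\<lambda>x. sm c (u x)) \<in> I) \<and>
     (\<forall>r\<in>R. \<forall>u\<in>I. r \<circ> u \<in> I \<and> u \<circ> r \<in> I)"

definition ideal_A :: "('k::field \<Rightarrow> 'a::comm_ring_1 \<Rightarrow> 'a) \<Rightarrow> 'a set \<Rightarrow> bool" where
  "ideal_A sm I \<longleftrightarrow> 0 \<in> I \<and> (\<forall>x\<in>I. \<forall>y\<in>I. x + y \<in> I \<and> x - y \<in> I) \<and>
     (\<forall>c. \<forall>x\<in>I. sm c x \<in> I) \<and> (\<forall>a. \<forall>x\<in>I. a * x \<in> I)"

definition RSR :: "('a::comm_ring_1 \<Rightarrow> 'a) set \<Rightarrow> ('a \<Rightarrow> 'a) set \<Rightarrow> ('a \<Rightarrow> 'a) set" where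
  "RSR R S = {w. \<exists>(n::nat) r s t. (\<forall>i<n. r i \<in> R \<and> s i \<in> S \<and> t i \<in> R) \<and>
                  w = (\<lambda>x. \<Sum>i<n. r i (s i (t i x)))}"

end

theory Submission
  imports Defs
begin

(* A nonzero operator of minimal order in the ideal commutes with every multiplication operator,
   because its commutators with them lie in the ideal and have smaller order; so it is itself
   multiplication by a nonzero element of the ideal, and the contraction to A is nonzero.
   An operator u of order at most one has [u, a] = u(a) - a u(1) in A, and u - u(1) is a
   derivation in R with the same commutators with A as u. *)

lemma K_algebra_smult_diff:
  assumes "K_algebra sm"
  shows "sm c (x - y) = sm c x - sm c y"
proof -
  have "sm c ((x - y) + y) = sm c (x - y) + sm c y"
    using assms unfolding K_algebra_def by blast
  then show ?thesis by (simp add: algebra_simps)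
qed

lemma End_K_diff:
  assumes "K_algebra sm" "u \<in> End_K sm" "v \<in> End_K sm"
  shows "(\<lambda>x. u x - v x) \<in> End_K sm"
  using assms K_algebra_smult_diff[OF assms(1)] unfolding End_K_def by auto

lemma mulop_in_End_K:
  assumes "K_algebra sm"
  shows "mulop c \<in> End_K sm"
proof -
  have "sm k (x * c) = sm k x * c" for k x
    using assms unfolding K_algebra_def by blast
  then show ?thesis unfolding End_K_def mulop_def by (simp add: algebra_simps)
qed

lemma mulop_eq_iff [simp]: "mulop x = mulop y \<longleftrightarrow> x = y"
  unfolding mulop_def by (metis mult.right_neutral)

lemma mulop_zero: "mulop 0 = (\<lambda>x. 0)"
  by (simp add: mulop_def fun_eq_iff)

lemma mulop_add: "mulop (x + y) = (\<lambda>z. mulop x z + mulop y z)"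
  by (simp add: mulop_def fun_eq_iff distrib_right)

lemma mulop_diff: "mulop (x - y) = (\<lambda>z. mulop x z - mulop y z)"
  by (simp add: mulop_def fun_eq_iff left_diff_distrib)

lemma mulop_mult: "mulop (a * x) = mulop a \<circ> mulop x"
  unfolding mulop_def by (simp add: fun_eq_iff mult.assoc)

lemma mulop_smult:
  assumes "K_algebra sm"
  shows "mulop (sm c x) = (\<lambda>z. sm c (mulop x z))"
  using assms unfolding K_algebra_def mulop_def by simp

lemma eq_mulop_if_comm_mulop_zero:
  assumes "\<And>a. comm (mulop a) u = (\<lambda>x. 0)"
  shows "u = mulop (u 1)"
proof
  fix a
  have "a * u 1 - u (a * 1) = 0"
    using fun_cong[OF assms[of a], of 1] unfolding comm_def mulop_def .
  then show "u a = mulop (u 1) a" unfolding mulop_def by (simp add: mult.commute)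
qed

lemma Dord_0_eq_range_mulop:
  fixes sm :: "'k::field \<Rightarrow> 'a::comm_ring_1 \<Rightarrow> 'a"
  assumes "K_algebra sm"
  shows "Dord sm 0 = range mulop"
proof -
  have "comm (mulop a) (mulop c) = (\<lambda>x. 0)" for a c :: 'a
    unfolding comm_def mulop_def by (simp add: algebra_simps)
  then have "range mulop \<subseteq> Dord sm 0"
    using mulop_in_End_K[OF assms] by (auto simp: Dord_def)
  moreover have "Dord sm 0 \<subseteq> range mulop"
    using eq_mulop_if_comm_mulop_zero by (fastforce simp: Dord_def)
  ultimately show ?thesis by blast
qed

lemma comm_mulop_Dord_1:
  assumes "u \<in> Dord sm 1"
  shows "comm u (mulop a) = mulop (u a - a * u 1)"
proof -
  have "comm (mulop a) u \<in> Dsh sm (Suc 0)"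
    using assms by (simp add: Dord_def)
  then have "comm (mulop a) u = mulop (comm (mulop a) u 1)"
    by (intro eq_mulop_if_comm_mulop_zero) simp
  then have "comm (mulop a) u = mulop (a * u 1 - u a)"
    by (simp add: comm_def mulop_def)
  then show ?thesis
    by (simp add: fun_eq_iff comm_def mulop_def algebra_simps)
qed

lemma Der_K_subset_Dord_1:
  assumes "K_algebra sm"
  shows "Der_K sm \<subseteq> Dord sm 1"
proof
  fix d assume d: "d \<in> Der_K sm"
  have "comm (mulop a) d = mulop (- d a)" for a
    using d by (simp add: Der_K_def fun_eq_iff comm_def mulop_def algebra_simps)
  then have "comm (mulop a) d \<in> Dord sm 0" for a
    by (simp add: Dord_0_eq_range_mulop[OF assms])
  with d show "d \<in> Dord sm 1"
    by (simp add: Der_K_def Dord_def)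
qed

lemma Dord_1_minus_mulop_in_Der_K:
  assumes "K_algebra sm" "u \<in> Dord sm 1"
  shows "(\<lambda>z. u z - mulop (u 1) z) \<in> Der_K sm"
proof -
  have "u \<in> End_K sm"
    using assms(2) by (simp add: Dord_def)
  then have "(\<lambda>z. u z - mulop (u 1) z) \<in> End_K sm"
    using End_K_diff mulop_in_End_K assms(1) by blast
  moreover have "u (a * z) = a * u z + (u a - a * u 1) * z" for a z
    using fun_cong[OF comm_mulop_Dord_1[OF assms(2), of z], of a]
    by (simp add: comm_def mulop_def algebra_simps)
  ultimately show ?thesis
    by (simp add: Der_K_def mulop_def algebra_simps)
qed

lemma comm_minus_mulop_mulop: "comm (\<lambda>z. u z - mulop c z) (mulop x) = comm u (mulop x)"
  by (simp add: fun_eq_iff comm_def mulop_def algebra_simps)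

lemma ideal_R_comm_mem:
  assumes "ideal_R sm R I" "r \<in> R" "v \<in> I"
  shows "comm r v \<in> I"
proof -
  have "r \<circ> v \<in> I" "v \<circ> r \<in> I"
    using assms unfolding ideal_R_def by blast+
  then have "(\<lambda>x. (r \<circ> v) x - (v \<circ> r) x) \<in> I"
    using assms(1) unfolding ideal_R_def by blast
  then show ?thesis by (simp add: comm_def)
qed

lemma ideal_R_add_mem:
  assumes "ideal_R sm R I" "u \<in> I" "v \<in> I"
  shows "(\<lambda>x. u x + v x) \<in> I"
  using assms unfolding ideal_R_def by blast

lemma ideal_R_sum_mem:
  assumes "ideal_R sm R I"
  shows "(\<And>i. i < (n::nat) \<Longrightarrow> f i \<in> I) \<Longrightarrow> (\<lambda>x. \<Sum>i<n. f i x) \<in> I"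
proof (induction n)
  case 0
  have "(\<lambda>x. 0) \<in> I" using assms(1) unfolding ideal_R_def by blast
  then show ?case by simp
next
  case (Suc n)
  have "(\<lambda>x. \<Sum>i<n. f i x) \<in> I"
    using Suc.IH Suc.prems by simp
  moreover have "f n \<in> I"
    using Suc.prems by blast
  ultimately show ?case
    using ideal_R_add_mem[OF assms(1)] by fastforce
qed
lemma RSR_subset_ideal_R:
  assumes "ideal_R sm R I" "S \<subseteq> I"
  shows "RSR R S \<subseteq> I"
proof
  fix w assume "w \<in> RSR R S"
  then obtain n r s t where rst: "\<And>i. i < n \<Longrightarrow> r i \<in> R \<and> s i \<in> S \<and> t i \<in> R"
    and w: "w = (\<lambda>x. \<Sum>i<(n::nat). r i (s i (t i x)))"
    unfolding RSR_def by blast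
  have "(r i \<circ> s i) \<circ> t i \<in> I" if "i < n" for i
    using assms rst[OF that] unfolding ideal_R_def by blast
  then have "(\<lambda>x. r i (s i (t i x))) \<in> I" if "i < n" for i
    using that by (simp add: comp_def)
  then show "w \<in> I"
    unfolding w by (rule ideal_R_sum_mem[OF assms(1)])
qed

lemma subset_RSR:
  assumes "id \<in> R"
  shows "S \<subseteq> RSR R S"
proof
  fix s assume "s \<in> S"
  then show "s \<in> RSR R S"
    unfolding RSR_def using assms
    by (intro CollectI exI[of _ 1] exI[of _ "\<lambda>_. id"] exI[of _ "\<lambda>_. s"]) simp
qed

lemma ideal_A_contraction:
  assumes "K_algebra sm" "ideal_R sm R I" "range mulop \<subseteq> R"
  shows "ideal_A sm {x. mulop x \<in> I}"
proof -
  have "mulop a \<circ> mulop x \<in> I" if "mulop x \<in> I" for a x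
    using assms(2,3) that unfolding ideal_R_def by blast
  with assms(2) show ?thesis
    unfolding ideal_A_def ideal_R_def
    by (simp add: mulop_zero mulop_add mulop_diff mulop_mult mulop_smult[OF assms(1)])
qed

lemma ideal_R_mem_Dsh_imp_nonzero_mulop_mem:
  assumes "ideal_R sm R I" "range mulop \<subseteq> R" "u \<in> I" "u \<in> Dsh sm k" "u \<noteq> (\<lambda>x. 0)"
  shows "\<exists>x. x \<noteq> 0 \<and> mulop x \<in> I"
  using assms(3-)
proof (induction k arbitrary: u)
  case 0
  then show ?case by simp
next
  case (Suc k)
  show ?case
  proof (cases "\<forall>a. comm (mulop a) u = (\<lambda>x. 0)")
    case True
    then have "u = mulop (u 1)"
      by (intro eq_mulop_if_comm_mulop_zero) simp
    with Suc.prems show ?thesis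
      by (metis mulop_zero)
  next
    case False
    then obtain a where "comm (mulop a) u \<noteq> (\<lambda>x. 0)" by blast
    moreover have "comm (mulop a) u \<in> I"
      using ideal_R_comm_mem assms(1,2) Suc.prems(1) by blast
    moreover have "comm (mulop a) u \<in> Dsh sm k"
      using Suc.prems(2) by simp
    ultimately show ?thesis using Suc.IH by blast
  qed
qed

lemma contraction_nonzero:
  assumes "ideal_R sm R I" "range mulop \<subseteq> R" "R \<subseteq> DiffOps sm" "I \<noteq> {\<lambda>x. 0}"
  shows "{x. mulop x \<in> I} \<noteq> {0}"
proof -
  obtain u where u: "u \<in> I" "u \<noteq> (\<lambda>x. 0)"
    using assms(1,4) unfolding ideal_R_def by blast
  moreover have "u \<in> DiffOps sm"
    using u(1) assms(1,3) unfolding ideal_R_def by blast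
  then obtain i where "u \<in> Dsh sm (Suc i)"
    unfolding DiffOps_def Dord_def by blast
  ultimately show ?thesis
    using ideal_R_mem_Dsh_imp_nonzero_mulop_mem[OF assms(1,2)] by blast
qed

lemma comm_Dord_1_contraction:
  assumes "ideal_R sm R I" "u \<in> R \<inter> Dord sm 1" "mulop x \<in> I"
  shows "comm u (mulop x) \<in> mulop ` {x. mulop x \<in> I}"
  using ideal_R_comm_mem[OF assms(1) _ assms(3), of u] assms(2)
  by (auto simp: comm_mulop_Dord_1)

lemma RSR_contraction_inter_range_mulop:
  assumes "ideal_R sm R I" "id \<in> R"
  shows "RSR R (mulop ` {x. mulop x \<in> I}) \<inter> range mulop = mulop ` {x. mulop x \<in> I}"
proof
  show "RSR R (mulop ` {x. mulop x \<in> I}) \<inter> range mulop \<subseteq> mulop ` {x. mulop x \<in> I}"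
  proof
    fix w assume w: "w \<in> RSR R (mulop ` {x. mulop x \<in> I}) \<inter> range mulop"
    then obtain y where y: "w = mulop y" by blast
    have "w \<in> I"
      using w RSR_subset_ideal_R[OF assms(1), of "mulop ` {x. mulop x \<in> I}"] by blast
    then show "w \<in> mulop ` {x. mulop x \<in> I}"
      unfolding y by simp
  qed
  show "mulop ` {x. mulop x \<in> I} \<subseteq> RSR R (mulop ` {x. mulop x \<in> I}) \<inter> range mulop"
    using subset_RSR[OF assms(2)] by (intro Int_greatest) auto
qed

lemma comm_Dord_1_invariant_iff_comm_Der_K_invariant:
  assumes "K_algebra sm" "subalgebra_D sm R" "range mulop \<subseteq> R"
  shows "(\<forall>u \<in> R \<inter> Dord sm 1. \<forall>x \<in> J. comm u (mulop x) \<in> mulop ` J) \<longleftrightarrow>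
         (\<forall>d \<in> (R \<inter> Dord sm 1) \<inter> Der_K sm. \<forall>x \<in> J. comm d (mulop x) \<in> mulop ` J)"
proof
  assume Der_invariant: "\<forall>d \<in> (R \<inter> Dord sm 1) \<inter> Der_K sm. \<forall>x \<in> J. comm d (mulop x) \<in> mulop ` J"
  have Der_part: "(\<lambda>z. u z - mulop (u 1) z) \<in> (R \<inter> Dord sm 1) \<inter> Der_K sm"
    if "u \<in> R \<inter> Dord sm 1" for u
  proof -
    have "mulop (u 1) \<in> R"
      using assms(3) by blast
    then have "(\<lambda>z. u z - mulop (u 1) z) \<in> R"
      using that assms(2) unfolding subalgebra_D_def by blast
    moreover have "(\<lambda>z. u z - mulop (u 1) z) \<in> Der_K sm"
      using that Dord_1_minus_mulop_in_Der_K[OF assms(1)] by blast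
    ultimately show ?thesis
      using Der_K_subset_Dord_1[OF assms(1)] by blast
  qed
  show "\<forall>u \<in> R \<inter> Dord sm 1. \<forall>x \<in> J. comm u (mulop x) \<in> mulop ` J"
  proof (intro ballI)
    fix u x assume "u \<in> R \<inter> Dord sm 1" "x \<in> J"
    then have "comm (\<lambda>z. u z - mulop (u 1) z) (mulop x) \<in> mulop ` J"
      using Der_invariant Der_part by blast
    then show "comm u (mulop x) \<in> mulop ` J"
      by (simp only: comm_minus_mulop_mulop)
  qed
qed blast

theorem theorem1p8:
  fixes sm :: "'k::field \<Rightarrow> 'a::comm_ring_1 \<Rightarrow> 'a"
    and R :: "('a \<Rightarrow> 'a) set"
  assumes alg: "K_algebra sm"
    and sub: "subalgebra_D sm R"
    and AR: "range mulop \<subseteq> R"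
  shows "(\<forall>\<aa>. ideal_R sm R \<aa> \<and> \<aa> \<noteq> {\<lambda>x. 0} \<longrightarrow>
            (let \<aa>0 = {x. mulop x \<in> \<aa>} in
               ideal_A sm \<aa>0 \<and> \<aa>0 \<noteq> {0} \<and>
               (\<forall>u \<in> R \<inter> Dord sm 1. \<forall>x \<in> \<aa>0. comm u (mulop x) \<in> mulop ` \<aa>0) \<and>
               RSR R (mulop ` \<aa>0) \<inter> range mulop = mulop ` \<aa>0))
       \<and> (\<forall>\<aa>0. ideal_A sm \<aa>0 \<longrightarrow>
            ((\<forall>u \<in> R \<inter> Dord sm 1. \<forall>x \<in> \<aa>0. comm u (mulop x) \<in> mulop ` \<aa>0) \<longleftrightarrow>
             (\<forall>d \<in> (R \<inter> Dord sm 1) \<inter> Der_K sm. \<forall>x \<in> \<aa>0. comm d (mulop x) \<in> mulop ` \<aa>0)))"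
proof (intro conjI allI impI)
  fix I assume "ideal_R sm R I \<and> I \<noteq> {\<lambda>x. 0}"
  then have I: "ideal_R sm R I" and nonzero: "I \<noteq> {\<lambda>x. 0}" by auto
  have "R \<subseteq> DiffOps sm" "id \<in> R"
    using sub unfolding subalgebra_D_def by blast+
  then show "let \<aa>0 = {x. mulop x \<in> I} in
               ideal_A sm \<aa>0 \<and> \<aa>0 \<noteq> {0} \<and>
               (\<forall>u \<in> R \<inter> Dord sm 1. \<forall>x \<in> \<aa>0. comm u (mulop x) \<in> mulop ` \<aa>0) \<and>
               RSR R (mulop ` \<aa>0) \<inter> range mulop = mulop ` \<aa>0"
    by (simp add: ideal_A_contraction[OF alg I AR] contraction_nonzero[OF I AR _ nonzero]
        comm_Dord_1_contraction[OF I] RSR_contraction_inter_range_mulop[OF I])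
qed (rule comm_Dord_1_invariant_iff_comm_Der_K_invariant[OF alg sub AR])

end
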